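(* Let $\Gamma=(V,E)$ be a graph, for each $v\in V$ let $C_v$ be a left LCM monoid, and let $C=\Gamma_{v\in V}C_v$. Then for each $v\in V$, the inverse hull $IH^0(C_v)$ embeds in $IH^0(C)$, i.e. there is an injective monoid homomorphism $IH^0(C_v)\to IH^0(C)$.
   Context: A graph $\Gamma=(V,E)$ has vertex set $V$ and irreflexive symmetric edge relation $E$. The graph product $\Gamma_{v\in V}C_v$ of pairwise disjoint monoids $C_v$ is the quotient of their free product by the congruence generated by all $(mn,nm)$ with $m\in C_u$, $n\in C_v$, $(u,v)\in E$. A left LCM monoid is a right cancellative monoid in which the intersection of any two principal left ideals is empty or principal. For a right cancellative monoid $D$ and $a\in D$, $\rho_a:D\to D$, $x\mapsto xa$, is regarded as an element of the symmetric inverse monoid of all partial bijections of $D$; the inverse hull $IH(D)$ is the inverse submonoid generated by all $\rho_a$, and $IH^0(D)=IH(D)\cup\{\emptyset\}$ with the empty map as zero. *)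

theory Defs
  imports "HOL-Algebra.Group"
begin

definition right_cancellative :: "('a, 'm) monoid_scheme \<Rightarrow> bool" where
  "right_cancellative D \<longleftrightarrow>
     (\<forall>x\<in>carrier D. \<forall>y\<in>carrier D. \<forall>a\<in>carrier D. x \<otimes>\<^bsub>D\<^esub> a = y \<otimes>\<^bsub>D\<^esub> a \<longrightarrow> x = y)"

definition principal_left_ideal :: "('a, 'm) monoid_scheme \<Rightarrow> 'a \<Rightarrow> 'a set" where
  "principal_left_ideal D a = {b \<otimes>\<^bsub>D\<^esub> a | b. b \<in> carrier D}"

definition left_LCM_monoid :: "('a, 'm) monoid_scheme \<Rightarrow> bool" where
  "left_LCM_monoid D \<longleftrightarrow> monoid D \<and> right_cancellative D \<and>
     (\<forall>x\<in>carrier D. \<forall>y\<in>carrier D.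
        principal_left_ideal D x \<inter> principal_left_ideal D y = {} \<or>
        (\<exists>z\<in>carrier D. principal_left_ideal D x \<inter> principal_left_ideal D y
                          = principal_left_ideal D z))"

text \<open>Partial bijections of the carrier are represented as partial maps.
  rho a is right multiplication by a, defined on all of the carrier.\<close>

definition rho :: "('a, 'm) monoid_scheme \<Rightarrow> 'a \<Rightarrow> ('a \<rightharpoonup> 'a)" where
  "rho D a = (\<lambda>x. if x \<in> carrier D then Some (x \<otimes>\<^bsub>D\<^esub> a) else None)"

definition rho_inv :: "('a, 'm) monoid_scheme \<Rightarrow> 'a \<Rightarrow> ('a \<rightharpoonup> 'a)" where
  "rho_inv D a = (\<lambda>y. if (\<exists>x\<in>carrier D. x \<otimes>\<^bsub>D\<^esub> a = y)
                       then Some (THE x. x \<in> carrier D \<and> x \<otimes>\<^bsub>D\<^esub> a = y) else None)"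

definition pid :: "('a, 'm) monoid_scheme \<Rightarrow> ('a \<rightharpoonup> 'a)" where
  "pid D = (\<lambda>x. if x \<in> carrier D then Some x else None)"

text \<open>Product in the symmetric inverse monoid: f then g (left-to-right
  composition, so that rho a * rho b = rho (a b)).\<close>

definition pmult :: "('a \<rightharpoonup> 'a) \<Rightarrow> ('a \<rightharpoonup> 'a) \<Rightarrow> ('a \<rightharpoonup> 'a)" where
  "pmult f g = g \<circ>\<^sub>m f"

inductive_set IH :: "('a, 'm) monoid_scheme \<Rightarrow> ('a \<rightharpoonup> 'a) set"
  for D where
  IH_one: "pid D \<in> IH D"
| IH_rho: "\<lbrakk>f \<in> IH D; a \<in> carrier D\<rbrakk> \<Longrightarrow> pmult f (rho D a) \<in> IH D"
| IH_rho_inv: "\<lbrakk>f \<in> IH D; a \<in> carrier D\<rbrakk> \<Longrightarrow> pmult f (rho_inv D a) \<in> IH D"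

definition IH0 :: "('a, 'm) monoid_scheme \<Rightarrow> ('a \<rightharpoonup> 'a) monoid" where
  "IH0 D = \<lparr>carrier = IH D \<union> {Map.empty}, mult = pmult, one = pid D\<rparr>"

text \<open>Pairwise disjointness of the C v is realised by tagging each element
  with its vertex.  Words are lists of letters (v, a) with v in V and a in C v.\<close>

definition gp_words :: "'v set \<Rightarrow> ('v \<Rightarrow> ('a, 'm) monoid_scheme) \<Rightarrow> ('v \<times> 'a) list set" where
  "gp_words V C = lists (SIGMA v:V. carrier (C v))"

inductive gp_rel :: "'v set \<Rightarrow> ('v \<Rightarrow> 'v \<Rightarrow> bool) \<Rightarrow> ('v \<Rightarrow> ('a, 'm) monoid_scheme)
                     \<Rightarrow> ('v \<times> 'a) list \<Rightarrow> ('v \<times> 'a) list \<Rightarrow> bool"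
  for V E C where
  gp_one: "v \<in> V \<Longrightarrow> gp_rel V E C [(v, \<one>\<^bsub>C v\<^esub>)] []"
| gp_mult: "\<lbrakk>v \<in> V; a \<in> carrier (C v); b \<in> carrier (C v)\<rbrakk> \<Longrightarrow>
            gp_rel V E C [(v, a), (v, b)] [(v, a \<otimes>\<^bsub>C v\<^esub> b)]"
| gp_comm: "\<lbrakk>u \<in> V; v \<in> V; E u v; a \<in> carrier (C u); b \<in> carrier (C v)\<rbrakk> \<Longrightarrow>
            gp_rel V E C [(u, a), (v, b)] [(v, b), (u, a)]"
| gp_refl: "w \<in> gp_words V C \<Longrightarrow> gp_rel V E C w w"
| gp_sym: "gp_rel V E C w w' \<Longrightarrow> gp_rel V E C w' w"
| gp_trans: "\<lbrakk>gp_rel V E C w w'; gp_rel V E C w' w''\<rbrakk> \<Longrightarrow> gp_rel V E C w w''"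
| gp_ctxt: "\<lbrakk>gp_rel V E C w w'; xs \<in> gp_words V C; ys \<in> gp_words V C\<rbrakk> \<Longrightarrow>
            gp_rel V E C (xs @ w @ ys) (xs @ w' @ ys)"

definition gp_class :: "'v set \<Rightarrow> ('v \<Rightarrow> 'v \<Rightarrow> bool) \<Rightarrow> ('v \<Rightarrow> ('a, 'm) monoid_scheme)
                        \<Rightarrow> ('v \<times> 'a) list \<Rightarrow> ('v \<times> 'a) list set" where
  "gp_class V E C w = {w'. gp_rel V E C w w'}"

definition graph_product :: "'v set \<Rightarrow> ('v \<Rightarrow> 'v \<Rightarrow> bool) \<Rightarrow> ('v \<Rightarrow> ('a, 'm) monoid_scheme)
                             \<Rightarrow> ('v \<times> 'a) list set monoid" where
  "graph_product V E C =
     \<lparr>carrier = gp_class V E C ` gp_words V C,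
      mult = (\<lambda>X Y. \<Union>x\<in>X. \<Union>y\<in>Y. gp_class V E C (x @ y)),
      one = gp_class V E C []\<rparr>"

end

theory Submission
  imports Defs
begin

text \<open>Every element of the graph product \<open>C\<close> factors uniquely as \<open>y \<iota>(d)\<close> with
  \<open>d \<in> C\<^sub>v\<close>, \<open>\<iota>\<close> the inclusion of \<open>C\<^sub>v\<close>, and \<open>y\<close> represented by a reduced word that
  cannot be rearranged to end in a letter from \<open>C\<^sub>v\<close>; right multiplication by \<open>\<iota>(a)\<close>
  only changes the \<open>C\<^sub>v\<close>-coordinate. So a partial bijection \<open>f\<close> of \<open>C\<^sub>v\<close> lifts to
  \<open>y \<iota>(d) \<mapsto> y \<iota>(f d)\<close>. Lifting is injective and multiplicative, and it sends
  \<open>rho a\<close> to \<open>rho (\<iota> a)\<close> and \<open>rho_inv a\<close> to \<open>rho_inv (\<iota> a)\<close>; hence it embeds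
  \<open>IH\<^sup>0(C\<^sub>v)\<close> into \<open>IH\<^sup>0(C)\<close>.

  Uniqueness of the factorisation is the normal form theorem for graph products: reduced
  words representing the same element differ only by commuting adjacent letters. It is
  proved by letting letters act on reduced words (van der Waerden's argument), with words
  up to commutation handled through their projections onto pairs of non-commuting vertices.\<close>

section \<open>Lifting partial maps along a free right action\<close>

lemma rho_inv_eq_SomeI:
  assumes "x \<in> carrier D" "x \<otimes>\<^bsub>D\<^esub> a = y"
    and "\<And>x'. x' \<in> carrier D \<Longrightarrow> x' \<otimes>\<^bsub>D\<^esub> a = y \<Longrightarrow> x' = x"
  shows "rho_inv D a y = Some x"
proof -
  have "(THE x'. x' \<in> carrier D \<and> x' \<otimes>\<^bsub>D\<^esub> a = y) = x"
    by (rule the_equality) (use assms in blast)+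
  then show ?thesis using assms(1,2) unfolding rho_inv_def by auto
qed

lemma rho_inv_eq_None:
  assumes "\<And>x. x \<in> carrier D \<Longrightarrow> x \<otimes>\<^bsub>D\<^esub> a \<noteq> y"
  shows "rho_inv D a y = None"
  using assms unfolding rho_inv_def by auto

lemma rho_inv_eq_Some_iff:
  assumes cancel: "right_cancellative D" and a: "a \<in> carrier D"
  shows "rho_inv D a y = Some x \<longleftrightarrow> x \<in> carrier D \<and> x \<otimes>\<^bsub>D\<^esub> a = y"
proof -
  have unique: "rho_inv D a y = Some x0" if "x0 \<in> carrier D" "x0 \<otimes>\<^bsub>D\<^esub> a = y" for x0
  proof (rule rho_inv_eq_SomeI[OF that])
    fix x' assume "x' \<in> carrier D" "x' \<otimes>\<^bsub>D\<^esub> a = y"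
    then show "x' = x0" using cancel a that unfolding right_cancellative_def by metis
  qed
  show ?thesis
  proof
    assume x: "rho_inv D a y = Some x"
    then obtain x0 where "x0 \<in> carrier D" "x0 \<otimes>\<^bsub>D\<^esub> a = y"
      by (metis option.distinct(1) rho_inv_eq_None)
    with x show "x \<in> carrier D \<and> x \<otimes>\<^bsub>D\<^esub> a = y" using unique by simp
  qed (use unique in blast)
qed

lemma IH_dom_ran:
  assumes "monoid D" "right_cancellative D" "f \<in> IH D"
  shows "dom f \<subseteq> carrier D \<and> ran f \<subseteq> carrier D"
  using assms(3)
proof induction
  case IH_one
  then show ?case by (auto simp: pid_def dom_def ran_def split: if_splits)
next
  case (IH_rho f a)
  then show ?case
    by (auto simp: pmult_def rho_def dom_def ran_def map_comp_Some_iff monoid.m_closed[OF assms(1)]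
        split: if_splits)
next
  case (IH_rho_inv f a)
  then show ?case
    by (auto simp: pmult_def dom_def ran_def map_comp_Some_iff rho_inv_eq_Some_iff[OF assms(2)])
qed

locale right_free_extension =
  fixes D :: "('a, 'm) monoid_scheme" and G :: "('b, 'n) monoid_scheme"
    and \<iota> :: "'a \<Rightarrow> 'b" and Y :: "'b set"
  assumes monoid_D: "monoid D" and cancel_D: "right_cancellative D"
    and iota_closed: "\<And>a. a \<in> carrier D \<Longrightarrow> \<iota> a \<in> carrier G"
    and factor_bij: "bij_betw (\<lambda>(y, d). y \<otimes>\<^bsub>G\<^esub> \<iota> d) (Y \<times> carrier D) (carrier G)"
    and factor_mult: "\<And>y d a. \<lbrakk>y \<in> Y; d \<in> carrier D; a \<in> carrier D\<rbrakk> \<Longrightarrow>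
       (y \<otimes>\<^bsub>G\<^esub> \<iota> d) \<otimes>\<^bsub>G\<^esub> \<iota> a = y \<otimes>\<^bsub>G\<^esub> \<iota> (d \<otimes>\<^bsub>D\<^esub> a)"
begin

lemma cancel:
  "\<lbrakk>x \<in> carrier D; x' \<in> carrier D; a \<in> carrier D; x \<otimes>\<^bsub>D\<^esub> a = x' \<otimes>\<^bsub>D\<^esub> a\<rbrakk> \<Longrightarrow> x = x'"
  using cancel_D unfolding right_cancellative_def by blast

lemma factor_closed: "y \<in> Y \<Longrightarrow> d \<in> carrier D \<Longrightarrow> y \<otimes>\<^bsub>G\<^esub> \<iota> d \<in> carrier G"
  using bij_betw_apply[OF factor_bij, of "(y, d)"] by simp

lemma factor_inject:
  "\<lbrakk>y \<in> Y; d \<in> carrier D; y' \<in> Y; d' \<in> carrier D; y \<otimes>\<^bsub>G\<^esub> \<iota> d = y' \<otimes>\<^bsub>G\<^esub> \<iota> d'\<rbrakk>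
     \<Longrightarrow> y = y' \<and> d = d'"
  using inj_onD[OF bij_betw_imp_inj_on[OF factor_bij], of "(y, d)" "(y', d')"] by auto

lemma factorE:
  assumes "Z \<in> carrier G"
  obtains y d where "y \<in> Y" "d \<in> carrier D" "Z = y \<otimes>\<^bsub>G\<^esub> \<iota> d"
  using assms bij_betw_imp_surj_on[OF factor_bij] by force

lemma mult_iota_closed: "X \<in> carrier G \<Longrightarrow> a \<in> carrier D \<Longrightarrow> X \<otimes>\<^bsub>G\<^esub> \<iota> a \<in> carrier G"
  by (auto elim!: factorE simp: factor_mult factor_closed monoid.m_closed[OF monoid_D])

definition lift :: "('a \<rightharpoonup> 'a) \<Rightarrow> ('b \<rightharpoonup> 'b)" where
  "lift f Z = (if Z \<in> carrier G then
     (case the_inv_into (Y \<times> carrier D) (\<lambda>(y, d). y \<otimes>\<^bsub>G\<^esub> \<iota> d) Z of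
        (y, d) \<Rightarrow> map_option (\<lambda>e. y \<otimes>\<^bsub>G\<^esub> \<iota> e) (f d))
     else None)"

lemma lift_factor:
  assumes "y \<in> Y" "d \<in> carrier D"
  shows "lift f (y \<otimes>\<^bsub>G\<^esub> \<iota> d) = map_option (\<lambda>e. y \<otimes>\<^bsub>G\<^esub> \<iota> e) (f d)"
proof -
  have "the_inv_into (Y \<times> carrier D) (\<lambda>(y, d). y \<otimes>\<^bsub>G\<^esub> \<iota> d) (y \<otimes>\<^bsub>G\<^esub> \<iota> d) = (y, d)"
    using the_inv_into_f_f[OF bij_betw_imp_inj_on[OF factor_bij], of "(y, d)"] assms by simp
  then show ?thesis using factor_closed[OF assms] unfolding lift_def by simp
qed

lemma lift_outside: "Z \<notin> carrier G \<Longrightarrow> lift f Z = None"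
  unfolding lift_def by simp

lemma lift_empty: "lift Map.empty = Map.empty"
  unfolding lift_def by (auto split: prod.split)

lemma lift_pid: "lift (pid D) = pid G"
proof
  fix Z
  show "lift (pid D) Z = pid G Z"
    by (cases "Z \<in> carrier G")
       (auto elim!: factorE simp: lift_factor lift_outside factor_closed pid_def)
qed

lemma lift_pmult:
  assumes "ran f \<subseteq> carrier D"
  shows "lift (pmult f g) = pmult (lift f) (lift g)"
proof
  fix Z
  show "lift (pmult f g) Z = pmult (lift f) (lift g) Z"
  proof (cases "Z \<in> carrier G")
    case True
    then obtain y d where yd: "y \<in> Y" "d \<in> carrier D" "Z = y \<otimes>\<^bsub>G\<^esub> \<iota> d" by (rule factorE)
    show ?thesis
    proof (cases "f d")
      case (Some e)
      then have "e \<in> carrier D" using assms by (auto simp: ran_def)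
      then show ?thesis using yd Some by (simp add: lift_factor pmult_def)
    qed (use yd in \<open>simp add: lift_factor pmult_def\<close>)
  qed (simp add: lift_outside pmult_def)
qed

lemma lift_rho:
  assumes "a \<in> carrier D"
  shows "lift (rho D a) = rho G (\<iota> a)"
proof
  fix Z
  show "lift (rho D a) Z = rho G (\<iota> a) Z"
    by (cases "Z \<in> carrier G")
       (auto elim!: factorE simp: lift_factor lift_outside factor_closed factor_mult assms rho_def)
qed

lemma mult_iota_eq_factor_iff:
  assumes "X \<in> carrier G" "a \<in> carrier D" "y \<in> Y" "d \<in> carrier D"
  shows "X \<otimes>\<^bsub>G\<^esub> \<iota> a = y \<otimes>\<^bsub>G\<^esub> \<iota> d \<longleftrightarrow> (\<exists>x\<in>carrier D. X = y \<otimes>\<^bsub>G\<^esub> \<iota> x \<and> x \<otimes>\<^bsub>D\<^esub> a = d)"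
proof -
  obtain y' x where x: "y' \<in> Y" "x \<in> carrier D" "X = y' \<otimes>\<^bsub>G\<^esub> \<iota> x"
    using assms(1) by (rule factorE)
  have Xa: "X \<otimes>\<^bsub>G\<^esub> \<iota> a = y' \<otimes>\<^bsub>G\<^esub> \<iota> (x \<otimes>\<^bsub>D\<^esub> a)"
    using x by (simp add: factor_mult assms(2))
  have xa: "x \<otimes>\<^bsub>D\<^esub> a \<in> carrier D" using monoid.m_closed[OF monoid_D x(2) assms(2)] .
  show ?thesis
  proof
    assume "X \<otimes>\<^bsub>G\<^esub> \<iota> a = y \<otimes>\<^bsub>G\<^esub> \<iota> d"
    then have "y' = y \<and> x \<otimes>\<^bsub>D\<^esub> a = d"
      using factor_inject[OF x(1) xa assms(3,4)] Xa by simp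
    then show "\<exists>x\<in>carrier D. X = y \<otimes>\<^bsub>G\<^esub> \<iota> x \<and> x \<otimes>\<^bsub>D\<^esub> a = d" using x by blast
  qed (auto simp: factor_mult assms)
qed

lemma rho_inv_iota_factor:
  assumes a: "a \<in> carrier D" and y: "y \<in> Y" and d: "d \<in> carrier D"
  shows "rho_inv G (\<iota> a) (y \<otimes>\<^bsub>G\<^esub> \<iota> d) = map_option (\<lambda>x. y \<otimes>\<^bsub>G\<^esub> \<iota> x) (rho_inv D a d)"
proof (cases "\<exists>x\<in>carrier D. x \<otimes>\<^bsub>D\<^esub> a = d")
  case True
  then obtain x where x: "x \<in> carrier D" "x \<otimes>\<^bsub>D\<^esub> a = d" by blast
  have "rho_inv D a d = Some x" using x rho_inv_eq_Some_iff[OF cancel_D a] by blast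
  moreover have "rho_inv G (\<iota> a) (y \<otimes>\<^bsub>G\<^esub> \<iota> d) = Some (y \<otimes>\<^bsub>G\<^esub> \<iota> x)"
  proof (rule rho_inv_eq_SomeI)
    show "y \<otimes>\<^bsub>G\<^esub> \<iota> x \<in> carrier G" using factor_closed[OF y x(1)] .
    show "y \<otimes>\<^bsub>G\<^esub> \<iota> x \<otimes>\<^bsub>G\<^esub> \<iota> a = y \<otimes>\<^bsub>G\<^esub> \<iota> d" using factor_mult[OF y x(1) a] x(2) by simp
  next
    fix X assume "X \<in> carrier G" "X \<otimes>\<^bsub>G\<^esub> \<iota> a = y \<otimes>\<^bsub>G\<^esub> \<iota> d"
    then obtain x' where "x' \<in> carrier D" "X = y \<otimes>\<^bsub>G\<^esub> \<iota> x'" "x' \<otimes>\<^bsub>D\<^esub> a = d"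
      using mult_iota_eq_factor_iff[OF _ a y d] by blast
    then show "X = y \<otimes>\<^bsub>G\<^esub> \<iota> x" using cancel[OF _ x(1) a] x(2) by simp
  qed
  ultimately show ?thesis by simp
next
  case False
  then have "rho_inv D a d = None" by (auto intro: rho_inv_eq_None)
  moreover have "rho_inv G (\<iota> a) (y \<otimes>\<^bsub>G\<^esub> \<iota> d) = None"
  proof (rule rho_inv_eq_None)
    fix X assume "X \<in> carrier G"
    then show "X \<otimes>\<^bsub>G\<^esub> \<iota> a \<noteq> y \<otimes>\<^bsub>G\<^esub> \<iota> d"
      using False mult_iota_eq_factor_iff[OF _ a y d] by blast
  qed
  ultimately show ?thesis by simp
qed

lemma lift_rho_inv:
  assumes a: "a \<in> carrier D"
  shows "lift (rho_inv D a) = rho_inv G (\<iota> a)"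
proof
  fix Z
  show "lift (rho_inv D a) Z = rho_inv G (\<iota> a) Z"
  proof (cases "Z \<in> carrier G")
    case True
    then show ?thesis by (auto elim!: factorE simp: lift_factor rho_inv_iota_factor a)
  next
    case False
    have "rho_inv G (\<iota> a) Z = None"
      using False mult_iota_closed[OF _ a] by (intro rho_inv_eq_None) auto
    then show ?thesis using False by (simp add: lift_outside)
  qed
qed

lemma lift_IH: "f \<in> IH D \<Longrightarrow> lift f \<in> IH G"
proof (induction rule: IH.induct)
  case IH_one
  then show ?case by (simp add: lift_pid IH.IH_one)
next
  case (IH_rho f a)
  have "ran f \<subseteq> carrier D" using IH_dom_ran[OF monoid_D cancel_D IH_rho.hyps(1)] by blast
  then have "lift (pmult f (rho D a)) = pmult (lift f) (rho G (\<iota> a))"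
    by (simp only: lift_pmult lift_rho[OF IH_rho.hyps(2)])
  then show ?case using IH.IH_rho[OF IH_rho.IH iota_closed[OF IH_rho.hyps(2)]] by simp
next
  case (IH_rho_inv f a)
  have "ran f \<subseteq> carrier D" using IH_dom_ran[OF monoid_D cancel_D IH_rho_inv.hyps(1)] by blast
  then have "lift (pmult f (rho_inv D a)) = pmult (lift f) (rho_inv G (\<iota> a))"
    by (simp only: lift_pmult lift_rho_inv[OF IH_rho_inv.hyps(2)])
  then show ?case using IH.IH_rho_inv[OF IH_rho_inv.IH iota_closed[OF IH_rho_inv.hyps(2)]] by simp
qed

lemma lift_inject:
  assumes "dom f \<subseteq> carrier D" "dom g \<subseteq> carrier D" "ran f \<subseteq> carrier D" "ran g \<subseteq> carrier D"
    and "lift f = lift g"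
  shows "f = g"
proof
  fix x
  show "f x = g x"
  proof (cases "x \<in> carrier D")
    case True
    obtain y d where y: "y \<in> Y" and "d \<in> carrier D"
      using iota_closed[OF True] by (rule factorE)
    have "map_option (\<lambda>e. y \<otimes>\<^bsub>G\<^esub> \<iota> e) (f x) = map_option (\<lambda>e. y \<otimes>\<^bsub>G\<^esub> \<iota> e) (g x)"
      using lift_factor[OF y True, of f] lift_factor[OF y True, of g] assms(5) by simp
    then show ?thesis
    proof (rule option.inj_map_strong[rotated])
      fix e e' assume e: "e \<in> set_option (f x)" "e' \<in> set_option (g x)"
        and "y \<otimes>\<^bsub>G\<^esub> \<iota> e = y \<otimes>\<^bsub>G\<^esub> \<iota> e'"
      moreover have "e \<in> carrier D" "e' \<in> carrier D"
        using e assms(3,4) by (auto intro: ranI)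
      ultimately show "e = e'" using factor_inject[OF y _ y] by blast
    qed
  qed (metis assms(1,2) domIff subsetD)
qed

theorem IH0_embedding:
  "lift \<in> hom (IH0 D) (IH0 G) \<and> lift (pid D) = pid G \<and> inj_on lift (carrier (IH0 D))"
proof -
  have dom_ran: "dom f \<subseteq> carrier D \<and> ran f \<subseteq> carrier D" if "f \<in> carrier (IH0 D)" for f
    using that IH_dom_ran[OF monoid_D cancel_D] by (auto simp: IH0_def)
  have "lift \<in> carrier (IH0 D) \<rightarrow> carrier (IH0 G)"
    by (auto simp: IH0_def lift_IH lift_empty)
  moreover have "lift (f \<otimes>\<^bsub>IH0 D\<^esub> g) = lift f \<otimes>\<^bsub>IH0 G\<^esub> lift g"
    if "f \<in> carrier (IH0 D)" for f g
    using lift_pmult[of f g] dom_ran[OF that] by (simp add: IH0_def)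
  ultimately have "lift \<in> hom (IH0 D) (IH0 G)"
    by (simp add: hom_def)
  moreover have "inj_on lift (carrier (IH0 D))"
  proof (rule inj_onI)
    fix f g assume "f \<in> carrier (IH0 D)" "g \<in> carrier (IH0 D)" "lift f = lift g"
    then show "f = g" using dom_ran[of f] dom_ran[of g] by (intro lift_inject) auto
  qed
  ultimately show ?thesis by (simp add: lift_pid)
qed

end

section \<open>Trace equivalence\<close>

locale commutation_graph =
  fixes E :: "'v \<Rightarrow> 'v \<Rightarrow> bool"
  assumes irrefl: "\<And>u. \<not> E u u" and sym: "\<And>u w. E u w \<Longrightarrow> E w u"
begin

text \<open>By the
  projection lemma of trace theory this is the congruence generated by swapping adjacent
  letters from adjacent vertices (see \<open>trace_eq_imp_gp_rel\<close>).\<close>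

definition trace_eq :: "('v \<times> 'a) list \<Rightarrow> ('v \<times> 'a) list \<Rightarrow> bool" (infix "\<simeq>" 50) where
  "xs \<simeq> ys \<longleftrightarrow> (\<forall>u w. (u = w \<or> \<not> E u w) \<longrightarrow>
     filter (\<lambda>z. fst z = u \<or> fst z = w) xs = filter (\<lambda>z. fst z = u \<or> fst z = w) ys)"

lemma trace_eq_refl [simp]: "xs \<simeq> xs"
  by (simp add: trace_eq_def)

lemma trace_eq_sym: "xs \<simeq> ys \<Longrightarrow> ys \<simeq> xs"
  by (simp add: trace_eq_def)

lemma trace_eq_trans [trans]: "xs \<simeq> ys \<Longrightarrow> ys \<simeq> zs \<Longrightarrow> xs \<simeq> zs"
  by (simp add: trace_eq_def)

lemma trace_eq_append: "xs \<simeq> xs' \<Longrightarrow> ys \<simeq> ys' \<Longrightarrow> xs @ ys \<simeq> xs' @ ys'"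
  by (simp add: trace_eq_def)

lemma trace_eq_rev: "xs \<simeq> ys \<Longrightarrow> rev xs \<simeq> rev ys"
  unfolding trace_eq_def by (simp add: rev_filter[symmetric])

lemma trace_eq_snoc_cancel: "xs @ [x] \<simeq> ys @ [x] \<Longrightarrow> xs \<simeq> ys"
  unfolding trace_eq_def by (auto split: if_splits)

lemma trace_eq_set:
  fixes xs ys :: "('v \<times> 'a) list"
  assumes "xs \<simeq> ys"
  shows "set xs = set ys"
proof (rule Set.set_eqI)
  fix x :: "'v \<times> 'a"
  have "filter (\<lambda>z. fst z = fst x \<or> fst z = fst x) xs = filter (\<lambda>z. fst z = fst x \<or> fst z = fst x) ys"
    using assms unfolding trace_eq_def by blast
  then have "set (filter (\<lambda>z. fst z = fst x \<or> fst z = fst x) xs)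
    = set (filter (\<lambda>z. fst z = fst x \<or> fst z = fst x) ys)" by simp
  then show "x \<in> set xs \<longleftrightarrow> x \<in> set ys" by auto
qed

lemma trace_eq_Nil: "[] \<simeq> ys \<Longrightarrow> ys = []"
  using trace_eq_set[of "[]" ys] by simp

lemma trace_eq_move_right:
  assumes "\<forall>y\<in>set b. E (fst x) (fst y)"
  shows "a @ [x] @ b \<simeq> a @ b @ [x]"
  unfolding trace_eq_def
proof (intro allI impI)
  fix u w assume uw: "u = w \<or> \<not> E u w"
  let ?Q = "\<lambda>z. fst z = u \<or> fst z = w"
  have "filter ?Q b = []" if "?Q x"
  proof (rule filter_False, rule ballI)
    fix y assume "y \<in> set b"
    then have "E (fst x) (fst y)" using assms by blast
    then show "\<not> ?Q y" using that uw irrefl sym by metis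
  qed
  then show "filter ?Q (a @ [x] @ b) = filter ?Q (a @ b @ [x])" by auto
qed

lemma trace_eq_snocD:
  assumes "w @ [x] \<simeq> z"
  obtains a b where "z = a @ [x] @ b" "\<forall>y\<in>set b. E (fst x) (fst y)" "w \<simeq> a @ b"
proof -
  let ?P = "\<lambda>y. fst y = fst x \<or> fst y = fst x"
  have "filter ?P (w @ [x]) = filter ?P z" using assms unfolding trace_eq_def by blast
  then have "filter ?P (rev z) = x # rev (filter ?P w)" by (simp add: rev_filter[symmetric])
  then obtain us vs where "rev z = us @ x # vs" and us: "\<forall>u\<in>set us. \<not> ?P u"
    by (auto dest!: filter_eq_ConsD)
  then have z: "z = rev vs @ [x] @ rev us" by (metis append.assoc append_Cons rev.simps(2) rev_append rev_rev_ident)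
  have adj: "\<forall>y\<in>set (rev us). E (fst x) (fst y)"
  proof (rule ballI, rule ccontr)
    fix y assume y: "y \<in> set (rev us)" and ne: "\<not> E (fst x) (fst y)"
    let ?Q = "\<lambda>z. fst z = fst x \<or> fst z = fst y"
    have eq: "filter ?Q (w @ [x]) = filter ?Q z" using assms ne unfolding trace_eq_def by blast
    have "x = last (filter ?Q z)" by (simp flip: eq)
    also have "\<dots> = last (filter ?Q (rev us))"
      using y z by (metis (mono_tags, lifting) append_assoc filter_append filter_empty_conv last_appendR)
    finally have "x \<in> set (rev us)"
      by (metis (mono_tags, lifting) y filter_empty_conv filter_is_subset last_in_set subsetD)
    then show False using us by auto
  qed
  have "z \<simeq> rev vs @ rev us @ [x]" using z trace_eq_move_right[OF adj] by simp
  then have "w \<simeq> rev vs @ rev us"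
    using assms trace_eq_trans trace_eq_snoc_cancel by (metis append_assoc)
  with z adj show ?thesis by (rule that)
qed

lemma trace_eq_ConsD:
  assumes "x # w \<simeq> z"
  obtains a b where "z = a @ [x] @ b" "\<forall>y\<in>set a. E (fst x) (fst y)" "w \<simeq> a @ b"
proof -
  have "rev w @ [x] \<simeq> rev z" using trace_eq_rev[OF assms] by simp
  then obtain a b where "rev z = a @ [x] @ b" "\<forall>y\<in>set b. E (fst x) (fst y)" "rev w \<simeq> a @ b"
    by (rule trace_eq_snocD)
  then show ?thesis
    using that[of "rev b" "rev a"] trace_eq_rev by (metis append.assoc rev_append rev_rev_ident rev_singleton_conv set_rev)
qed

lemma trace_eq_snoc_same_vertex:
  assumes "p @ [(u, c)] \<simeq> p' @ [(u, c')]"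
  shows "c = c' \<and> p \<simeq> p'"
proof -
  obtain a b where ab: "p' @ [(u, c')] = a @ [(u, c)] @ b" "\<forall>y\<in>set b. E u (fst y)" "p \<simeq> a @ b"
    using assms by (auto elim: trace_eq_snocD)
  have "b = []"
  proof (rule ccontr)
    assume "b \<noteq> []"
    then have "(u, c') \<in> set b" using ab(1) by (metis append_assoc last_appendR last_in_set last_snoc)
    then show False using ab(2) irrefl by fastforce
  qed
  then show ?thesis using ab by auto
qed

end

section \<open>Words in a graph product\<close>

fun has_mergeable_pair :: "('v \<times> 'a) list \<Rightarrow> bool" where
  "has_mergeable_pair (x # y # r) \<longleftrightarrow> fst x = fst y \<or> has_mergeable_pair (y # r)"
| "has_mergeable_pair _ \<longleftrightarrow> False"

lemma has_mergeable_pair_append: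
  "has_mergeable_pair (a @ b) \<longleftrightarrow> has_mergeable_pair a \<or> has_mergeable_pair b
     \<or> (a \<noteq> [] \<and> b \<noteq> [] \<and> fst (last a) = fst (hd b))"
proof (induction a rule: has_mergeable_pair.induct)
  case ("2_2" x)
  then show ?case by (cases b) auto
qed auto

locale graph_product_context = commutation_graph E
  for E :: "'v \<Rightarrow> 'v \<Rightarrow> bool" +
  fixes V :: "'v set" and C :: "'v \<Rightarrow> ('a, 'm) monoid_scheme"
  assumes monoid_C: "\<And>u. u \<in> V \<Longrightarrow> monoid (C u)"
begin

abbreviation W :: "('v \<times> 'a) list set" where
  "W \<equiv> gp_words V C"

abbreviation gp_equiv :: "('v \<times> 'a) list \<Rightarrow> ('v \<times> 'a) list \<Rightarrow> bool" (infix "\<approx>" 50) where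
  "w \<approx> w' \<equiv> gp_rel V E C w w'"

declare gp_rel.gp_trans [trans]

lemma words_iff: "w \<in> W \<longleftrightarrow> (\<forall>x\<in>set w. fst x \<in> V \<and> snd x \<in> carrier (C (fst x)))"
  unfolding gp_words_def by auto

lemma words_append [simp]: "a @ b \<in> W \<longleftrightarrow> a \<in> W \<and> b \<in> W"
  unfolding gp_words_def by auto

lemma words_Cons [simp]: "x # b \<in> W \<longleftrightarrow> fst x \<in> V \<and> snd x \<in> carrier (C (fst x)) \<and> b \<in> W"
  unfolding gp_words_def by (cases x) auto

lemma words_Nil [simp]: "[] \<in> W"
  unfolding gp_words_def by auto

lemma gp_rel_words: "w \<approx> w' \<Longrightarrow> w \<in> W \<and> w' \<in> W"
proof (induction rule: gp_rel.induct)
  case (gp_one v)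
  then show ?case using monoid.one_closed[OF monoid_C] by simp
next
  case (gp_mult v a b)
  then show ?case using monoid.m_closed[OF monoid_C] by simp
qed auto

lemma gp_rel_append:
  assumes a: "a \<approx> a'" and b: "b \<approx> b'"
  shows "a @ b \<approx> a' @ b'"
proof -
  have "[] @ a @ b \<approx> [] @ a' @ b"
    using gp_rel.gp_ctxt[OF a words_Nil] gp_rel_words[OF b] by blast
  moreover have "a' @ b @ [] \<approx> a' @ b' @ []"
    using gp_rel.gp_ctxt[OF b _ words_Nil] gp_rel_words[OF a] by blast
  ultimately show ?thesis by (auto intro: gp_rel.gp_trans)
qed

lemma gp_rel_append_left: "w \<approx> w' \<Longrightarrow> p \<in> W \<Longrightarrow> p @ w \<approx> p @ w'"
  by (rule gp_rel_append[OF gp_rel.gp_refl])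

lemma gp_rel_append_right: "w \<approx> w' \<Longrightarrow> p \<in> W \<Longrightarrow> w @ p \<approx> w' @ p"
  by (rule gp_rel_append[OF _ gp_rel.gp_refl])

lemma gp_rel_move_front:
  "a @ [x] @ b \<in> W \<Longrightarrow> \<forall>y\<in>set a. E (fst x) (fst y) \<Longrightarrow> a @ [x] @ b \<approx> x # a @ b"
proof (induction a)
  case Nil
  then show ?case by (simp add: gp_rel.gp_refl)
next
  case (Cons y a)
  have "fst x \<in> V" "snd x \<in> carrier (C (fst x))" "fst y \<in> V" "snd y \<in> carrier (C (fst y))"
    using Cons.prems(1) by auto
  then have "[y, x] \<approx> [x, y]"
    using gp_rel.gp_comm[of "fst y" V "fst x" E "snd y" C "snd x"] Cons.prems(2) sym by simp
  then have "[y, x] @ a @ b \<approx> [x, y] @ a @ b"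
    using Cons.prems(1) by (intro gp_rel_append_right) auto
  moreover have "[y] @ a @ [x] @ b \<approx> [y] @ x # a @ b"
    using Cons by (intro gp_rel_append_left) auto
  ultimately show ?case by (auto intro: gp_rel.gp_trans)
qed

lemma trace_eq_imp_gp_rel: "xs \<simeq> ys \<Longrightarrow> xs \<in> W \<Longrightarrow> ys \<in> W \<Longrightarrow> xs \<approx> ys"
proof (induction xs arbitrary: ys)
  case Nil
  then show ?case using trace_eq_Nil gp_rel.gp_refl by blast
next
  case (Cons x xs)
  obtain a b where ab: "ys = a @ [x] @ b" "\<forall>y\<in>set a. E (fst x) (fst y)" "xs \<simeq> a @ b"
    using Cons.prems(1) by (rule trace_eq_ConsD)
  have "xs \<approx> a @ b" using Cons ab by simp
  then have "x # xs \<approx> x # a @ b"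
    using gp_rel_append_left[of _ _ "[x]"] Cons.prems by simp
  moreover have "ys \<approx> x # a @ b" using gp_rel_move_front ab Cons.prems by simp
  ultimately show ?case by (blast intro: gp_rel.gp_trans gp_rel.gp_sym)
qed

lemma gp_class_eq_iff: "w' \<in> W \<Longrightarrow> gp_class V E C w = gp_class V E C w' \<longleftrightarrow> w \<approx> w'"
  unfolding gp_class_def by (blast intro: gp_rel.gp_refl gp_rel.gp_sym gp_rel.gp_trans)

lemma carrier_graph_product: "carrier (graph_product V E C) = gp_class V E C ` W"
  unfolding graph_product_def by simp

lemma mult_graph_product:
  assumes w: "w \<in> W" and w': "w' \<in> W"
  shows "gp_class V E C w \<otimes>\<^bsub>graph_product V E C\<^esub> gp_class V E C w' = gp_class V E C (w @ w')"
proof -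
  have class_append: "gp_class V E C (x @ y) = gp_class V E C (w @ w')"
    if "x \<in> gp_class V E C w" "y \<in> gp_class V E C w'" for x y
  proof -
    have "w @ w' \<approx> x @ y" using that gp_rel_append unfolding gp_class_def by blast
    from gp_rel.gp_sym[OF this] show ?thesis using gp_class_eq_iff[of "w @ w'" "x @ y"] w w' by simp
  qed
  have "w \<in> gp_class V E C w" "w' \<in> gp_class V E C w'"
    using w w' gp_rel.gp_refl unfolding gp_class_def by auto
  then have "(\<Union>x\<in>gp_class V E C w. \<Union>y\<in>gp_class V E C w'. gp_class V E C (x @ y))
      = gp_class V E C (w @ w')"
    using class_append by (intro equalityI subsetI) (blast, metis UN_I)
  then show ?thesis unfolding graph_product_def by simp
qed

definition letter :: "'v \<Rightarrow> 'a \<Rightarrow> ('v \<times> 'a) list" where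
  "letter u c = (if c = \<one>\<^bsub>C u\<^esub> then [] else [(u, c)])"

definition can_end_in :: "'v \<Rightarrow> ('v \<times> 'a) list \<Rightarrow> bool" where
  "can_end_in u w \<longleftrightarrow> (\<exists>p c. w \<simeq> p @ [(u, c)])"

definition reduced :: "('v \<times> 'a) list \<Rightarrow> bool" where
  "reduced w \<longleftrightarrow> w \<in> W \<and> (\<forall>x\<in>set w. snd x \<noteq> \<one>\<^bsub>C (fst x)\<^esub>)
     \<and> (\<forall>z. w \<simeq> z \<longrightarrow> \<not> has_mergeable_pair z)"

lemma letter_one [simp]: "letter u \<one>\<^bsub>C u\<^esub> = []"
  by (simp add: letter_def)

lemma letter_neq_one: "c \<noteq> \<one>\<^bsub>C u\<^esub> \<Longrightarrow> letter u c = [(u, c)]"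
  by (simp add: letter_def)

lemma gp_rel_letter: "u \<in> V \<Longrightarrow> c \<in> carrier (C u) \<Longrightarrow> [(u, c)] \<approx> letter u c"
  by (cases "c = \<one>\<^bsub>C u\<^esub>") (auto simp: letter_neq_one intro: gp_rel.gp_one gp_rel.gp_refl)

lemma can_end_in_trace_eq: "w \<simeq> w' \<Longrightarrow> can_end_in u w \<Longrightarrow> can_end_in u w'"
  unfolding can_end_in_def using trace_eq_sym trace_eq_trans by blast

lemma reduced_words: "reduced w \<Longrightarrow> w \<in> W"
  unfolding reduced_def by blast

lemma reduced_Nil [simp]: "reduced []"
  unfolding reduced_def using trace_eq_Nil by fastforce

lemma reduced_trace_eq:
  assumes "reduced w" "w \<simeq> w'"
  shows "reduced w'"
proof -
  have "set w = set w'" using trace_eq_set[OF assms(2)] .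
  then show ?thesis
    using assms trace_eq_sym trace_eq_trans unfolding reduced_def words_iff by metis
qed

lemma reduced_appendD:
  assumes "reduced (w @ s)"
  shows "reduced w"
  unfolding reduced_def
proof (intro conjI allI impI)
  show "w \<in> W" "\<forall>x\<in>set w. snd x \<noteq> \<one>\<^bsub>C (fst x)\<^esub>"
    using assms unfolding reduced_def by auto
  fix z assume "w \<simeq> z"
  then have "w @ s \<simeq> z @ s" by (rule trace_eq_append[OF _ trace_eq_refl])
  then have "\<not> has_mergeable_pair (z @ s)" using assms unfolding reduced_def by blast
  then show "\<not> has_mergeable_pair z" using has_mergeable_pair_append by blast
qed

lemma not_can_end_in_snoc:
  assumes "reduced (w @ [(u, a)])"
  shows "\<not> can_end_in u w"
proof
  assume "can_end_in u w"
  then obtain p c where "w \<simeq> p @ [(u, c)]" unfolding can_end_in_def by blast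
  then have "w @ [(u, a)] \<simeq> p @ [(u, c), (u, a)]"
    using trace_eq_append[OF _ trace_eq_refl, of w "p @ [(u, c)]" "[(u, a)]"] by simp
  moreover have "has_mergeable_pair (p @ [(u, c), (u, a)])"
    using has_mergeable_pair_append[of p "[(u, c), (u, a)]"] by simp
  ultimately show False using assms unfolding reduced_def by blast
qed

lemma reduced_append_letter:
  assumes r: "reduced w" and u: "u \<in> V" and a: "a \<in> carrier (C u)" and nt: "\<not> can_end_in u w"
  shows "reduced (w @ letter u a)"
proof (cases "a = \<one>\<^bsub>C u\<^esub>")
  case False
  have "\<not> has_mergeable_pair z" if wz: "w @ [(u, a)] \<simeq> z" for z
  proof -
    obtain A B where z: "z = A @ [(u, a)] @ B" and B': "\<forall>y\<in>set B. E (fst (u, a)) (fst y)"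
      and AB: "w \<simeq> A @ B"
      using wz by (rule trace_eq_snocD)
    have B: "\<forall>y\<in>set B. E u (fst y)" using B' by simp
    have "\<not> has_mergeable_pair (A @ B)" using r AB unfolding reduced_def by blast
    then have nAB: "\<not> has_mergeable_pair A" "\<not> has_mergeable_pair B"
      using has_mergeable_pair_append by blast+
    have hdB: "u \<noteq> fst (hd B)" if "B \<noteq> []"
      using B irrefl that by (metis hd_in_set)
    have lastA: "fst (last A) \<noteq> u" if "A \<noteq> []"
    proof
      assume "fst (last A) = u"
      then have "A = butlast A @ [(u, snd (last A))]" using that by (metis append_butlast_last_id prod.collapse)
      then have "A @ B \<simeq> butlast A @ B @ [(u, snd (last A))]"
        using trace_eq_move_right[of B "(u, snd (last A))" "butlast A"] B by (metis append.assoc fst_conv)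
      then have "can_end_in u w" using AB trace_eq_trans unfolding can_end_in_def by (metis append.assoc)
      then show False using nt by blast
    qed
    show ?thesis
      unfolding z using nAB hdB lastA has_mergeable_pair_append[of A "[(u, a)] @ B"]
        has_mergeable_pair_append[of "[(u, a)]" B] by auto
  qed
  then show ?thesis
    using r u a False unfolding reduced_def by (auto simp: letter_neq_one)
qed (simp add: r)

lemma reduced_split_last:
  assumes r: "reduced r" and u: "u \<in> V"
  obtains p c where "r \<simeq> p @ letter u c" "\<not> can_end_in u p" "c \<in> carrier (C u)"
proof (cases "can_end_in u r")
  case True
  then obtain p c where pc: "r \<simeq> p @ [(u, c)]" unfolding can_end_in_def by blast
  have rp: "reduced (p @ [(u, c)])" using reduced_trace_eq[OF r pc] .
  then have "c \<in> carrier (C u)" "c \<noteq> \<one>\<^bsub>C u\<^esub>"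
    unfolding reduced_def by auto
  then show ?thesis using that[of p c] pc not_can_end_in_snoc[OF rp] by (simp add: letter_neq_one)
next
  case False
  then show ?thesis using that[of r "\<one>\<^bsub>C u\<^esub>"] monoid.one_closed[OF monoid_C[OF u]] by simp
qed

definition last_letter :: "'v \<Rightarrow> ('v \<times> 'a) list \<Rightarrow> ('v \<times> 'a) list \<times> 'a" where
  "last_letter u r = (SOME (p, c). r \<simeq> p @ [(u, c)])"

lemma last_letter_trace_eq:
  assumes "can_end_in u r" "last_letter u r = (p, c)"
  shows "r \<simeq> p @ [(u, c)]"
proof -
  have "\<exists>pc. (\<lambda>(p, c). r \<simeq> p @ [(u, c)]) pc" using assms(1) unfolding can_end_in_def by auto
  then have "(\<lambda>(p, c). r \<simeq> p @ [(u, c)]) (last_letter u r)"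
    unfolding last_letter_def by (rule someI_ex)
  then show ?thesis using assms(2) by simp
qed

text \<open>The right action of the letters on reduced words (up to \<open>\<simeq>\<close>). That it respects the
  defining relations of the graph product shows that reduced words are normal forms.\<close>

fun act :: "('v \<times> 'a) list \<Rightarrow> 'v \<times> 'a \<Rightarrow> ('v \<times> 'a) list" where
  "act r (u, a) = (if can_end_in u r
     then (case last_letter u r of (p, c) \<Rightarrow> p @ letter u (c \<otimes>\<^bsub>C u\<^esub> a))
     else r @ letter u a)"

declare act.simps [simp del]

lemma act_split:
  assumes pc: "r \<simeq> p @ letter u c" and nt: "\<not> can_end_in u p" and c: "c \<in> carrier (C u)"
    and a: "a \<in> carrier (C u)" and u: "u \<in> V"
  shows "act r (u, a) \<simeq> p @ letter u (c \<otimes>\<^bsub>C u\<^esub> a)"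
proof (cases "c = \<one>\<^bsub>C u\<^esub>")
  case True
  then have rp: "r \<simeq> p" using pc by simp
  then have "\<not> can_end_in u r" using nt can_end_in_trace_eq trace_eq_sym by blast
  then have "act r (u, a) = r @ letter u a" by (simp add: act.simps)
  moreover have "c \<otimes>\<^bsub>C u\<^esub> a = a" using True monoid.l_one[OF monoid_C[OF u] a] by simp
  ultimately show ?thesis using trace_eq_append[OF rp trace_eq_refl] by simp
next
  case False
  then have pc1: "r \<simeq> p @ [(u, c)]" using pc by (simp add: letter_neq_one)
  then have t: "can_end_in u r" unfolding can_end_in_def by blast
  obtain p0 c0 where l: "last_letter u r = (p0, c0)" by fastforce
  have "p0 @ [(u, c0)] \<simeq> p @ [(u, c)]"
    using trace_eq_trans[OF trace_eq_sym[OF last_letter_trace_eq[OF t l]] pc1] .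
  then have "c0 = c \<and> p0 \<simeq> p" by (rule trace_eq_snoc_same_vertex)
  moreover have "act r (u, a) = p0 @ letter u (c0 \<otimes>\<^bsub>C u\<^esub> a)" using t l by (simp add: act.simps)
  ultimately show ?thesis
    using trace_eq_append[OF _ trace_eq_refl[of "letter u (c \<otimes>\<^bsub>C u\<^esub> a)"], of p0 p] by simp
qed

lemma act_reduced:
  assumes r: "reduced r" and u: "u \<in> V" and a: "a \<in> carrier (C u)"
  shows "reduced (act r (u, a))"
proof -
  obtain p c where pc: "r \<simeq> p @ letter u c" "\<not> can_end_in u p" "c \<in> carrier (C u)"
    using reduced_split_last[OF r u] .
  have "reduced p" using reduced_appendD reduced_trace_eq[OF r pc(1)] by blast
  then have "reduced (p @ letter u (c \<otimes>\<^bsub>C u\<^esub> a))"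
    using reduced_append_letter u monoid.m_closed[OF monoid_C[OF u] pc(3) a] pc(2) by blast
  then show ?thesis using reduced_trace_eq act_split[OF pc a u] trace_eq_sym by blast
qed

lemma act_trace_eq:
  assumes r: "reduced r" and rr: "r \<simeq> r'" and u: "u \<in> V" and a: "a \<in> carrier (C u)"
  shows "act r (u, a) \<simeq> act r' (u, a)"
proof -
  obtain p c where pc: "r \<simeq> p @ letter u c" "\<not> can_end_in u p" "c \<in> carrier (C u)"
    using reduced_split_last[OF r u] .
  have "r' \<simeq> p @ letter u c" using pc(1) rr trace_eq_sym trace_eq_trans by blast
  then show ?thesis
    using act_split[OF pc a u] act_split[OF _ pc(2,3) a u] trace_eq_sym trace_eq_trans by blast
qed

lemma act_one:
  assumes r: "reduced r" and u: "u \<in> V"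
  shows "act r (u, \<one>\<^bsub>C u\<^esub>) \<simeq> r"
proof -
  obtain p c where pc: "r \<simeq> p @ letter u c" "\<not> can_end_in u p" "c \<in> carrier (C u)"
    using reduced_split_last[OF r u] .
  have "act r (u, \<one>\<^bsub>C u\<^esub>) \<simeq> p @ letter u (c \<otimes>\<^bsub>C u\<^esub> \<one>\<^bsub>C u\<^esub>)"
    using act_split[OF pc monoid.one_closed[OF monoid_C[OF u]] u] .
  then show ?thesis
    using pc(1,3) monoid.r_one[OF monoid_C[OF u]] trace_eq_sym trace_eq_trans by metis
qed

lemma act_mult:
  assumes r: "reduced r" and u: "u \<in> V" and a: "a \<in> carrier (C u)" and b: "b \<in> carrier (C u)"
  shows "act (act r (u, a)) (u, b) \<simeq> act r (u, a \<otimes>\<^bsub>C u\<^esub> b)"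
proof -
  obtain p c where pc: "r \<simeq> p @ letter u c" "\<not> can_end_in u p" "c \<in> carrier (C u)"
    using reduced_split_last[OF r u] .
  have ca: "c \<otimes>\<^bsub>C u\<^esub> a \<in> carrier (C u)" using monoid.m_closed[OF monoid_C[OF u] pc(3) a] .
  have "act (act r (u, a)) (u, b) \<simeq> p @ letter u ((c \<otimes>\<^bsub>C u\<^esub> a) \<otimes>\<^bsub>C u\<^esub> b)"
    using act_split[OF act_split[OF pc a u] pc(2) ca b u] .
  moreover have "act r (u, a \<otimes>\<^bsub>C u\<^esub> b) \<simeq> p @ letter u (c \<otimes>\<^bsub>C u\<^esub> (a \<otimes>\<^bsub>C u\<^esub> b))"
    using act_split[OF pc monoid.m_closed[OF monoid_C[OF u] a b] u] .
  ultimately show ?thesis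
    using monoid.m_assoc[OF monoid_C[OF u] pc(3) a b] trace_eq_sym trace_eq_trans by metis
qed

lemma not_can_end_in_append_letter:
  assumes nt: "\<not> can_end_in u s" and e: "E u w"
  shows "\<not> can_end_in u (s @ letter w d)"
proof (cases "d = \<one>\<^bsub>C w\<^esub>")
  case False
  show ?thesis
  proof
    assume "can_end_in u (s @ letter w d)"
    then obtain q f where "s @ [(w, d)] \<simeq> q @ [(u, f)]"
      using False unfolding can_end_in_def by (auto simp: letter_neq_one)
    then obtain A B where AB: "q @ [(u, f)] = A @ [(w, d)] @ B" "s \<simeq> A @ B"
      by (rule trace_eq_snocD)
    have "B \<noteq> []" using AB(1) e irrefl by auto
    then have "B = butlast B @ [(u, f)]"
      using AB(1) by (metis append_butlast_last_id append_is_Nil_conv last_appendR last_snoc)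
    then have "s \<simeq> (A @ butlast B) @ [(u, f)]" using AB(2) by (metis append_assoc)
    then show False using nt unfolding can_end_in_def by blast
  qed
qed (use nt in simp)

lemma trace_eq_letter_swap:
  assumes "E u w"
  shows "(s @ letter u c) @ letter w d \<simeq> (s @ letter w d) @ letter u c"
proof (cases "c = \<one>\<^bsub>C u\<^esub> \<or> d = \<one>\<^bsub>C w\<^esub>")
  case False
  then show ?thesis
    using trace_eq_move_right[of "[(w, d)]" "(u, c)" s] assms by (simp add: letter_neq_one)
qed auto

lemma reduced_split_last_adjacent:
  assumes r: "reduced r" and u: "u \<in> V" and w: "w \<in> V" and e: "E u w"
  obtains s c d where "r \<simeq> (s @ letter w d) @ letter u c" "\<not> can_end_in u s" "\<not> can_end_in w s"
    "c \<in> carrier (C u)" "d \<in> carrier (C w)"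
proof -
  obtain p c where pc: "r \<simeq> p @ letter u c" "\<not> can_end_in u p" "c \<in> carrier (C u)"
    using reduced_split_last[OF r u] .
  have "reduced p" using reduced_appendD reduced_trace_eq[OF r pc(1)] by blast
  then obtain s d where sd: "p \<simeq> s @ letter w d" "\<not> can_end_in w s" "d \<in> carrier (C w)"
    using reduced_split_last[OF _ w] by blast
  have "\<not> can_end_in u s"
  proof
    assume "can_end_in u s"
    then obtain q f where "s \<simeq> q @ [(u, f)]" unfolding can_end_in_def by blast
    then have "p \<simeq> (q @ [(u, f)]) @ letter w d"
      using sd(1) trace_eq_append[OF _ trace_eq_refl] trace_eq_trans by blast
    also have "\<dots> \<simeq> q @ letter w d @ [(u, f)]"
      using trace_eq_move_right[of "letter w d" "(u, f)" q] e by (simp add: letter_def)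
    finally have "can_end_in u p" unfolding can_end_in_def by (metis append.assoc)
    then show False using pc(2) by blast
  qed
  moreover have "r \<simeq> (s @ letter w d) @ letter u c"
    using pc(1) trace_eq_append[OF sd(1) trace_eq_refl] trace_eq_trans by blast
  ultimately show ?thesis using that sd(2,3) pc(3) by blast
qed

lemma act_comm:
  assumes r: "reduced r" and u: "u \<in> V" and w: "w \<in> V" and e: "E u w"
    and a: "a \<in> carrier (C u)" and b: "b \<in> carrier (C w)"
  shows "act (act r (u, a)) (w, b) \<simeq> act (act r (w, b)) (u, a)"
proof -
  obtain s c d where rwu: "r \<simeq> (s @ letter w d) @ letter u c"
    and s: "\<not> can_end_in u s" "\<not> can_end_in w s" and c: "c \<in> carrier (C u)" and d: "d \<in> carrier (C w)"
    using reduced_split_last_adjacent[OF r u w e] .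
  have ntw: "\<not> can_end_in w (s @ letter u x)" for x
    using not_can_end_in_append_letter[OF s(2) sym[OF e]] .
  have ntu: "\<not> can_end_in u (s @ letter w y)" for y
    using not_can_end_in_append_letter[OF s(1) e] .
  let ?c = "c \<otimes>\<^bsub>C u\<^esub> a" and ?d = "d \<otimes>\<^bsub>C w\<^esub> b"
  note swap = trace_eq_letter_swap[OF e]
  have "act r (u, a) \<simeq> (s @ letter w d) @ letter u ?c"
    using act_split[OF rwu ntu c a u] .
  then have "act r (u, a) \<simeq> (s @ letter u ?c) @ letter w d"
    using trace_eq_trans trace_eq_sym[OF swap] by blast
  then have A: "act (act r (u, a)) (w, b) \<simeq> (s @ letter u ?c) @ letter w ?d"
    using act_split[OF _ ntw d b w] by blast
  have "r \<simeq> (s @ letter u c) @ letter w d"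
    using trace_eq_trans[OF rwu trace_eq_sym[OF swap]] .
  then have "act r (w, b) \<simeq> (s @ letter u c) @ letter w ?d"
    using act_split[OF _ ntw d b w] by blast
  then have "act r (w, b) \<simeq> (s @ letter w ?d) @ letter u c"
    using trace_eq_trans swap by blast
  then have B: "act (act r (w, b)) (u, a) \<simeq> (s @ letter w ?d) @ letter u ?c"
    using act_split[OF _ ntu c a u] by blast
  show ?thesis using trace_eq_trans[OF A trace_eq_trans[OF swap trace_eq_sym[OF B]]] .
qed

subsection \<open>Normal forms\<close>

definition act_word :: "('v \<times> 'a) list \<Rightarrow> ('v \<times> 'a) list \<Rightarrow> ('v \<times> 'a) list" where
  "act_word = foldl act"

lemma act_word_Nil [simp]: "act_word r [] = r"
  by (simp add: act_word_def)

lemma act_word_Cons [simp]: "act_word r (x # w) = act_word (act r x) w"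
  by (simp add: act_word_def)

lemma act_word_append: "act_word r (a @ b) = act_word (act_word r a) b"
  by (simp add: act_word_def)

lemma act_word_reduced: "reduced r \<Longrightarrow> w \<in> W \<Longrightarrow> reduced (act_word r w)"
proof (induction w arbitrary: r)
  case (Cons x w)
  then show ?case using act_reduced[of r "fst x" "snd x"] by simp
qed simp

lemma act_word_trace_eq: "reduced r \<Longrightarrow> r \<simeq> r' \<Longrightarrow> w \<in> W \<Longrightarrow> act_word r w \<simeq> act_word r' w"
proof (induction w arbitrary: r r')
  case (Cons x w)
  then show ?case
    using act_trace_eq[of r r' "fst x" "snd x"] act_reduced[of r "fst x" "snd x"] by simp
qed simp

lemma act_word_gp_rel: "w \<approx> w' \<Longrightarrow> reduced r \<Longrightarrow> act_word r w \<simeq> act_word r w'"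
proof (induction arbitrary: r rule: gp_rel.induct)
  case (gp_one v)
  then show ?case using act_one by simp
next
  case (gp_mult v a b)
  then show ?case using act_mult by simp
next
  case (gp_comm u v a b)
  then show ?case using act_comm by simp
next
  case (gp_sym w w')
  then show ?case using trace_eq_sym by blast
next
  case (gp_trans w w' w'')
  then show ?case using trace_eq_trans by blast
next
  case (gp_ctxt w w' xs ys)
  let ?r = "act_word r xs"
  have r: "reduced ?r" using act_word_reduced gp_ctxt by blast
  then have "act_word ?r w \<simeq> act_word ?r w'" by (rule gp_ctxt.IH)
  moreover have "reduced (act_word ?r w)"
    using act_word_reduced[OF r] gp_rel_words[OF gp_ctxt.hyps(1)] by blast
  ultimately have "act_word (act_word ?r w) ys \<simeq> act_word (act_word ?r w') ys"
    using act_word_trace_eq gp_ctxt.hyps(3) by blast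
  then show ?case by (simp add: act_word_append)
qed simp

lemma act_word_reduced_self:
  assumes "reduced w"
  shows "act_word [] w \<simeq> w"
  using assms
proof (induction w rule: rev_induct)
  case (snoc x w)
  obtain u a where x: "x = (u, a)" by (cases x)
  have w: "reduced w" using reduced_appendD snoc.prems by blast
  have ua: "u \<in> V" "a \<in> carrier (C u)" "a \<noteq> \<one>\<^bsub>C u\<^esub>"
    using snoc.prems x unfolding reduced_def by auto
  have nt: "\<not> can_end_in u w" using not_can_end_in_snoc snoc.prems x by simp
  have "act (act_word [] w) (u, a) \<simeq> act w (u, a)"
    using act_trace_eq[OF act_word_reduced[OF reduced_Nil reduced_words[OF w]] snoc.IH[OF w] ua(1,2)] .
  also have "act w (u, a) \<simeq> w @ letter u (\<one>\<^bsub>C u\<^esub> \<otimes>\<^bsub>C u\<^esub> a)"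
    using act_split[of w w u, OF _ nt monoid.one_closed[OF monoid_C] ua(2) ua(1)] ua(1) by simp
  finally show ?case
    using x ua monoid.l_one[OF monoid_C] by (simp add: act_word_append letter_neq_one)
qed simp

lemma gp_rel_letter_mult:
  assumes u: "u \<in> V" and c: "c \<in> carrier (C u)" and a: "a \<in> carrier (C u)"
  shows "letter u c @ [(u, a)] \<approx> letter u (c \<otimes>\<^bsub>C u\<^esub> a)"
proof -
  have "letter u c @ [(u, a)] \<approx> [(u, c)] @ [(u, a)]"
    using gp_rel_append_right[OF gp_rel.gp_sym[OF gp_rel_letter[OF u c]]] u a by simp
  also have "[(u, c)] @ [(u, a)] \<approx> [(u, c \<otimes>\<^bsub>C u\<^esub> a)]"
    using gp_rel.gp_mult[where E = E and C = C, OF u c a] by simp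
  also have "[(u, c \<otimes>\<^bsub>C u\<^esub> a)] \<approx> letter u (c \<otimes>\<^bsub>C u\<^esub> a)"
    using gp_rel_letter[OF u monoid.m_closed[OF monoid_C[OF u] c a]] .
  finally show ?thesis .
qed

lemma gp_rel_act:
  assumes r: "reduced r" and u: "u \<in> V" and a: "a \<in> carrier (C u)"
  shows "r @ [(u, a)] \<approx> act r (u, a)"
proof -
  obtain p c where pc: "r \<simeq> p @ letter u c" "\<not> can_end_in u p" "c \<in> carrier (C u)"
    using reduced_split_last[OF r u] .
  have pc_red: "reduced (p @ letter u c)" using reduced_trace_eq[OF r pc(1)] .
  have pca: "p @ letter u (c \<otimes>\<^bsub>C u\<^esub> a) \<in> W"
    using reduced_words[OF reduced_append_letter[OF reduced_appendD[OF pc_red] u _ pc(2)]]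
      monoid.m_closed[OF monoid_C[OF u] pc(3) a] by blast
  have "r \<approx> p @ letter u c"
    using trace_eq_imp_gp_rel[OF pc(1) reduced_words[OF r] reduced_words[OF pc_red]] .
  then have "r @ [(u, a)] \<approx> (p @ letter u c) @ [(u, a)]"
    by (rule gp_rel_append_right) (simp add: u a)
  also have "(p @ letter u c) @ [(u, a)] \<approx> p @ letter u (c \<otimes>\<^bsub>C u\<^esub> a)"
    using gp_rel_append_left[OF gp_rel_letter_mult[OF u pc(3) a]] reduced_words[OF pc_red] by simp
  also have "p @ letter u (c \<otimes>\<^bsub>C u\<^esub> a) \<approx> act r (u, a)"
    using trace_eq_imp_gp_rel[OF trace_eq_sym[OF act_split[OF pc a u]] pca]
      reduced_words[OF act_reduced[OF r u a]] by blast
  finally show ?thesis .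
qed

lemma gp_rel_act_word: "reduced r \<Longrightarrow> w \<in> W \<Longrightarrow> r @ w \<approx> act_word r w"
proof (induction w arbitrary: r)
  case Nil
  then show ?case using gp_rel.gp_refl[OF reduced_words] by simp
next
  case (Cons x w)
  obtain u a where x: "x = (u, a)" by (cases x)
  have ua: "u \<in> V" "a \<in> carrier (C u)" "w \<in> W" using Cons.prems x by auto
  have "r @ x # w \<approx> act r (u, a) @ w"
    using gp_rel_append_right[OF gp_rel_act[OF Cons.prems(1) ua(1,2)] ua(3)] x by simp
  also have "act r (u, a) @ w \<approx> act_word (act r (u, a)) w"
    using Cons.IH act_reduced Cons.prems ua by blast
  finally show ?case using x by simp
qed

theorem reduced_gp_rel_imp_trace_eq:
  assumes "reduced w" "reduced w'" "w \<approx> w'"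
  shows "w \<simeq> w'"
  using act_word_gp_rel[OF assms(3) reduced_Nil] act_word_reduced_self[OF assms(1)]
    act_word_reduced_self[OF assms(2)] trace_eq_sym trace_eq_trans by metis

section \<open>Splitting off the last letter at a vertex\<close>

lemma gp_rel_split_vertex:
  assumes w: "w \<in> W" and v: "v \<in> V"
  obtains p d where "reduced p" "\<not> can_end_in v p" "d \<in> carrier (C v)" "w \<approx> p @ [(v, d)]"
proof -
  let ?r = "act_word [] w"
  have r: "reduced ?r" using act_word_reduced[OF reduced_Nil w] .
  obtain p c where pc: "?r \<simeq> p @ letter v c" "\<not> can_end_in v p" "c \<in> carrier (C v)"
    using reduced_split_last[OF r v] .
  have pc_red: "reduced (p @ letter v c)" using reduced_trace_eq[OF r pc(1)] .
  then have p: "reduced p" by (rule reduced_appendD)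
  have "w \<approx> ?r" using gp_rel_act_word[OF reduced_Nil w] by simp
  also have "?r \<approx> p @ letter v c"
    using trace_eq_imp_gp_rel[OF pc(1) reduced_words[OF r] reduced_words[OF pc_red]] .
  also have "p @ letter v c \<approx> p @ [(v, c)]"
    using gp_rel_append_left[OF gp_rel.gp_sym[OF gp_rel_letter[OF v pc(3)]] reduced_words[OF p]] .
  finally show ?thesis using that p pc(2,3) by blast
qed

lemma trace_eq_append_letter_cancel:
  assumes p: "\<not> can_end_in v p" and p': "\<not> can_end_in v p'"
    and eq: "p @ letter v d \<simeq> p' @ letter v d'"
  shows "p \<simeq> p' \<and> d = d'"
proof (cases "d = \<one>\<^bsub>C v\<^esub>"; cases "d' = \<one>\<^bsub>C v\<^esub>")
  assume "d \<noteq> \<one>\<^bsub>C v\<^esub>" "d' \<noteq> \<one>\<^bsub>C v\<^esub>"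
  then have "p @ [(v, d)] \<simeq> p' @ [(v, d')]" using eq by (simp add: letter_neq_one)
  then show ?thesis using trace_eq_snoc_same_vertex[of p v d p' d'] by simp
next
  assume "d = \<one>\<^bsub>C v\<^esub>" "d' \<noteq> \<one>\<^bsub>C v\<^esub>"
  then show ?thesis using p eq unfolding can_end_in_def by (auto simp: letter_neq_one)
next
  assume "d \<noteq> \<one>\<^bsub>C v\<^esub>" "d' = \<one>\<^bsub>C v\<^esub>"
  then show ?thesis using p' trace_eq_sym[OF eq] unfolding can_end_in_def by (auto simp: letter_neq_one)
qed (use eq in simp)

lemma gp_rel_split_vertex_unique:
  assumes p: "reduced p" "\<not> can_end_in v p" and p': "reduced p'" "\<not> can_end_in v p'"
    and v: "v \<in> V" and d: "d \<in> carrier (C v)" and d': "d' \<in> carrier (C v)"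
    and eq: "p @ [(v, d)] \<approx> p' @ [(v, d')]"
  shows "p \<approx> p' \<and> d = d'"
proof -
  have r: "reduced (p @ letter v d)" "reduced (p' @ letter v d')"
    using reduced_append_letter[OF p(1) v d p(2)] reduced_append_letter[OF p'(1) v d' p'(2)] .
  have "p @ letter v d \<approx> p @ [(v, d)]"
    using gp_rel_append_left[OF gp_rel.gp_sym[OF gp_rel_letter[OF v d]] reduced_words[OF p(1)]] .
  also note eq
  also have "p' @ [(v, d')] \<approx> p' @ letter v d'"
    using gp_rel_append_left[OF gp_rel_letter[OF v d'] reduced_words[OF p'(1)]] .
  finally have "p @ letter v d \<simeq> p' @ letter v d'"
    using reduced_gp_rel_imp_trace_eq r by blast
  then have "p \<simeq> p' \<and> d = d'" using trace_eq_append_letter_cancel p(2) p'(2) by blast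
  then show ?thesis using trace_eq_imp_gp_rel reduced_words p(1) p'(1) by blast
qed

definition classes_not_ending_in :: "'v \<Rightarrow> ('v \<times> 'a) list set set" where
  "classes_not_ending_in v = {gp_class V E C p | p. reduced p \<and> \<not> can_end_in v p}"

lemma mult_class_letter:
  "\<lbrakk>p \<in> W; v \<in> V; d \<in> carrier (C v)\<rbrakk> \<Longrightarrow>
     gp_class V E C p \<otimes>\<^bsub>graph_product V E C\<^esub> gp_class V E C [(v, d)] = gp_class V E C (p @ [(v, d)])"
  using mult_graph_product by simp

lemma bij_betw_factor_vertex:
  assumes v: "v \<in> V"
  shows "bij_betw (\<lambda>(y, d). y \<otimes>\<^bsub>graph_product V E C\<^esub> gp_class V E C [(v, d)])
           (classes_not_ending_in v \<times> carrier (C v)) (carrier (graph_product V E C))"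
    (is "bij_betw ?f ?A _")
  unfolding bij_betw_def
proof
  let ?cls = "gp_class V E C"
  show "inj_on ?f ?A"
  proof (rule inj_onI)
    fix x x' assume "x \<in> ?A" "x' \<in> ?A" and eq: "?f x = ?f x'"
    then obtain p d p' d' where x: "x = (?cls p, d)" "x' = (?cls p', d')"
      and p: "reduced p" "\<not> can_end_in v p" "d \<in> carrier (C v)"
      and p': "reduced p'" "\<not> can_end_in v p'" "d' \<in> carrier (C v)"
      unfolding classes_not_ending_in_def by blast
    have "?cls (p @ [(v, d)]) = ?cls (p' @ [(v, d')])"
      using eq x p p' mult_class_letter reduced_words v by simp
    then have "p @ [(v, d)] \<approx> p' @ [(v, d')]"
      using gp_class_eq_iff p'(1,3) v reduced_words by simp
    then have "p \<approx> p' \<and> d = d'"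
      using gp_rel_split_vertex_unique[OF p(1,2) p'(1,2) v p(3) p'(3)] by blast
    then show "x = x'"
      using x gp_class_eq_iff reduced_words[OF p'(1)] by simp
  qed
  show "?f ` ?A = carrier (graph_product V E C)"
  proof (intro equalityI subsetI)
    fix Z assume "Z \<in> ?f ` ?A"
    then obtain p d where "reduced p" "d \<in> carrier (C v)" "Z = ?cls (p @ [(v, d)])"
      using mult_class_letter reduced_words v by (auto simp: classes_not_ending_in_def)
    then show "Z \<in> carrier (graph_product V E C)"
      using v reduced_words by (simp add: carrier_graph_product)
  next
    fix Z assume "Z \<in> carrier (graph_product V E C)"
    then obtain w where w: "w \<in> W" "Z = ?cls w" by (auto simp: carrier_graph_product)
    then obtain p d where p: "reduced p" "\<not> can_end_in v p" "d \<in> carrier (C v)"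
      and "w \<approx> p @ [(v, d)]"
      using gp_rel_split_vertex[OF _ v] by blast
    then have "Z = ?f (?cls p, d)"
      using w gp_class_eq_iff mult_class_letter reduced_words v by simp
    then show "Z \<in> ?f ` ?A" using p by (auto simp: classes_not_ending_in_def)
  qed
qed

lemma right_free_extension_vertex:
  assumes v: "v \<in> V" and cancel: "right_cancellative (C v)"
  shows "right_free_extension (C v) (graph_product V E C) (\<lambda>d. gp_class V E C [(v, d)])
           (classes_not_ending_in v)"
proof (rule right_free_extension.intro)
  let ?cls = "gp_class V E C" and ?G = "graph_product V E C"
  show "monoid (C v)" using monoid_C[OF v] .
  show "right_cancellative (C v)" using cancel .
  show "?cls [(v, a)] \<in> carrier ?G" if "a \<in> carrier (C v)" for a
    using that v by (simp add: carrier_graph_product)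
  show "bij_betw (\<lambda>(y, d). y \<otimes>\<^bsub>?G\<^esub> ?cls [(v, d)]) (classes_not_ending_in v \<times> carrier (C v)) (carrier ?G)"
    using bij_betw_factor_vertex[OF v] .
  fix y d a assume "y \<in> classes_not_ending_in v" and d: "d \<in> carrier (C v)" and a: "a \<in> carrier (C v)"
  then obtain p where p: "y = ?cls p" "p \<in> W"
    using reduced_words by (auto simp: classes_not_ending_in_def)
  have da: "d \<otimes>\<^bsub>C v\<^esub> a \<in> carrier (C v)" using monoid.m_closed[OF monoid_C[OF v] d a] .
  have "(p @ [(v, d)]) @ [(v, a)] \<approx> p @ [(v, d \<otimes>\<^bsub>C v\<^esub> a)]"
    using gp_rel_append_left[OF gp_rel.gp_mult[where E = E and C = C, OF v d a] p(2)] by simp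
  then show "(y \<otimes>\<^bsub>?G\<^esub> ?cls [(v, d)]) \<otimes>\<^bsub>?G\<^esub> ?cls [(v, a)] = y \<otimes>\<^bsub>?G\<^esub> ?cls [(v, d \<otimes>\<^bsub>C v\<^esub> a)]"
    using p d a da v mult_class_letter gp_class_eq_iff by simp
qed

end

theorem proposition2p8:
  fixes V :: "'v set" and E :: "'v \<Rightarrow> 'v \<Rightarrow> bool"
    and C :: "'v \<Rightarrow> 'a monoid" and v :: 'v
  assumes irrefl: "\<And>u. \<not> E u u"
    and sym: "\<And>u w. E u w \<Longrightarrow> E w u"
    and LCM: "\<And>u. u \<in> V \<Longrightarrow> left_LCM_monoid (C u)"
    and v: "v \<in> V"
  shows "\<exists>h. h \<in> hom (IH0 (C v)) (IH0 (graph_product V E C))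
            \<and> h \<one>\<^bsub>IH0 (C v)\<^esub> = \<one>\<^bsub>IH0 (graph_product V E C)\<^esub>
            \<and> inj_on h (carrier (IH0 (C v)))"
proof -
  have monoids: "\<And>u. u \<in> V \<Longrightarrow> monoid (C u)" and cancel: "right_cancellative (C v)"
    using LCM v unfolding left_LCM_monoid_def by blast+
  interpret graph_product_context E V C
    using irrefl sym monoids
    by (simp add: graph_product_context_def graph_product_context_axioms_def commutation_graph_def)
  interpret right_free_extension "C v" "graph_product V E C" "\<lambda>d. gp_class V E C [(v, d)]"
      "classes_not_ending_in v"
    using right_free_extension_vertex[OF v cancel] .
  show ?thesis using IH0_embedding by (auto simp: IH0_def)
qed
end
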